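(* Let $2\le w<n$. If a Steiner system $S(2,w,n)$ exists, then $q'_0(2,w,n)=\frac{n-1}{w-1}+1$.
   Context: $\mathbb{Z}_q=\{0,\dots,q-1\}$ (an alphabet); $\mathrm{wt}$ = number of nonzero coordinates; $d$ = Hamming distance; $J_q(n,w)$ = weight-$w$ words of $\mathbb{Z}_q^n$. An $(n,w,d)_q$ code of size $M$ is a subset $C\subseteq J_q(n,w)$ with $|C|=M$ and pairwise distances at least $d$. A Steiner system $S(t,k,n)$ is a pair $(N,B)$, $|N|=n$, $B$ a set of $k$-subsets (blocks) of $N$ with every $t$-subset of $N$ in exactly one block. For $t,k,n$ such that an $S(t,k,n)$ exists, $q'_0(t,k,n)$ is the smallest $q$ for which an $(n,k,2k-t+1)_q$ code of size $\binom{n}{t}/\binom{k}{t}$ exists. *)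

theory Defs
  imports Complex_Main
begin

definition words :: "nat \<Rightarrow> nat \<Rightarrow> nat list set" where
  "words q n = {x. length x = n \<and> (\<forall>i<n. x ! i < q)}"

definition wt :: "nat list \<Rightarrow> nat" where
  "wt x = card {i. i < length x \<and> x ! i \<noteq> 0}"

definition hdist :: "nat list \<Rightarrow> nat list \<Rightarrow> nat" where
  "hdist x y = card {i. i < length x \<and> x ! i \<noteq> y ! i}"

definition J :: "nat \<Rightarrow> nat \<Rightarrow> nat \<Rightarrow> nat list set" where
  "J q n w = {x \<in> words q n. wt x = w}"

definition is_code :: "nat \<Rightarrow> nat \<Rightarrow> nat \<Rightarrow> nat \<Rightarrow> nat list set \<Rightarrow> bool" where
  "is_code q n w d C \<longleftrightarrow> C \<subseteq> J q n w \<and>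
     (\<forall>x\<in>C. \<forall>y\<in>C. x \<noteq> y \<longrightarrow> hdist x y \<ge> d)"

definition steiner_system :: "nat \<Rightarrow> nat \<Rightarrow> 'a set \<Rightarrow> 'a set set \<Rightarrow> bool" where
  "steiner_system t k N B \<longleftrightarrow> (\<forall>b\<in>B. b \<subseteq> N \<and> card b = k) \<and>
     (\<forall>T. T \<subseteq> N \<and> card T = t \<longrightarrow> (\<exists>!b. b \<in> B \<and> T \<subseteq> b))"

definition steiner_exists :: "nat \<Rightarrow> nat \<Rightarrow> nat \<Rightarrow> bool" where
  "steiner_exists t k n \<longleftrightarrow> (\<exists>(N::nat set) B. finite N \<and> card N = n \<and> steiner_system t k N B)"

definition q0' :: "nat \<Rightarrow> nat \<Rightarrow> nat \<Rightarrow> nat" where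
  "q0' t k n = (LEAST q. \<exists>C. is_code q n k (2 * k - t + 1) C \<and> finite C \<and>
       real (card C) = real (n choose t) / real (k choose t))"

end

theory Submission
  imports Defs
begin

text \<open>
  In an \<open>(n, w, 2w - 1)\<^sub>q\<close> code two codewords never carry the same nonzero symbol in the
  same coordinate: their supports would then meet, leaving distance at most \<open>2w - 2\<close>.
  Hence each coordinate is nonzero in at most \<open>q - 1\<close> codewords, so \<open>M w \<le> n (q - 1)\<close>,
  and a code of size \<open>n(n-1)/(w(w-1))\<close> forces \<open>q - 1 \<ge> (n-1)/(w-1) = r\<close>.
  Conversely, every point of an \<open>S(2, w, n)\<close> lies on exactly \<open>r\<close> blocks; labelling the blocks
  through each point by \<open>1, \<dots>, r\<close> and writing down, for every block, the labels it receives
  at its points gives \<open>|B|\<close> words of weight \<open>w\<close> over \<open>r + 1\<close> symbols. Two blocks share at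
  most one point, where their labels differ, so these words have distance at least \<open>2w - 1\<close>.
\<close>

lemma two_mult_choose_two: "2 * (k choose 2) = k * (k - 1)"
proof -
  have "even (k * (k - 1))" by (cases "even k") auto
  then show ?thesis by (simp add: choose_two)
qed

lemma sum_card_filter_swap:
  assumes "finite A" "finite X"
  shows "(\<Sum>a\<in>A. card {x\<in>X. R a x}) = (\<Sum>x\<in>X. card {a\<in>A. R a x})"
proof -
  have card_filter: "card {y\<in>Y. P y} = (\<Sum>y\<in>Y. if P y then 1 else (0::nat))"
    if "finite Y" for Y :: "'c set" and P
    using that by (simp add: sum.If_cases Int_def)
  have "(\<Sum>a\<in>A. card {x\<in>X. R a x}) = (\<Sum>a\<in>A. \<Sum>x\<in>X. if R a x then 1 else (0::nat))"
    using assms by (simp add: card_filter)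
  also have "\<dots> = (\<Sum>x\<in>X. \<Sum>a\<in>A. if R a x then 1 else (0::nat))"
    by (rule sum.swap)
  also have "\<dots> = (\<Sum>x\<in>X. card {a\<in>A. R a x})"
    using assms by (simp add: card_filter)
  finally show ?thesis .
qed

lemma real_eq_divide_iff_mult_eq:
  fixes m a k :: nat
  assumes "0 < k"
  shows "real m = real a / real k \<longleftrightarrow> m * k = a"
proof -
  have "real m = real a / real k \<longleftrightarrow> real (m * k) = real a"
    using assms by (simp add: eq_divide_eq)
  then show ?thesis by (simp only: of_nat_eq_iff)
qed

lemma bij_betw_card_filter:
  assumes "bij_betw f A N" "b \<subseteq> N"
  shows "card {i\<in>A. f i \<in> b} = card b"
proof -
  have "b \<subseteq> f ` {i\<in>A. f i \<in> b}"
  proof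
    fix y assume "y \<in> b"
    then have "y \<in> f ` A" using assms bij_betw_imp_surj_on by blast
    then show "y \<in> f ` {i\<in>A. f i \<in> b}" using \<open>y \<in> b\<close> by auto
  qed
  then have "bij_betw f {i\<in>A. f i \<in> b} b"
    by (intro bij_betw_subset[OF assms(1)]) auto
  then show ?thesis by (rule bij_betw_same_card)
qed

lemma steiner_systemD:
  assumes "steiner_system t k N B" "b \<in> B"
  shows "b \<subseteq> N" "card b = k"
  using assms unfolding steiner_system_def by auto

lemma steiner_system_finite_blocks:
  assumes "steiner_system t k N B" "finite N"
  shows "finite B"
proof -
  have "B \<subseteq> Pow N" using steiner_systemD(1)[OF assms(1)] by blast
  then show ?thesis using assms(2) by (simp add: finite_subset)
qed

lemma steiner_system_ex1_block:
  assumes "steiner_system 2 k N B" "x \<in> N" "y \<in> N" "x \<noteq> y"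
  shows "\<exists>!b. b \<in> B \<and> x \<in> b \<and> y \<in> b"
proof -
  have pair: "{x, y} \<subseteq> N \<and> card {x, y} = 2" using assms(2-4) by auto
  have "\<forall>T. T \<subseteq> N \<and> card T = 2 \<longrightarrow> (\<exists>!b. b \<in> B \<and> T \<subseteq> b)"
    using assms(1) unfolding steiner_system_def by (elim conjE)
  from this[rule_format, OF pair] show ?thesis by simp
qed

lemma steiner_system_blocks_meet_once:
  assumes "steiner_system 2 k N B" "b \<in> B" "c \<in> B" "b \<noteq> c"
    and "x \<in> b \<inter> c" "y \<in> b \<inter> c"
  shows "x = y"
proof (rule ccontr)
  assume "x \<noteq> y"
  have "x \<in> N" "y \<in> N" using steiner_systemD(1)[OF assms(1,2)] assms(5,6) by auto
  from steiner_system_ex1_block[OF assms(1) this \<open>x \<noteq> y\<close>] show False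
    using assms(2-6) by auto
qed

lemma steiner_system_card_Int_le_1:
  assumes "steiner_system 2 k N B" "b \<in> B" "c \<in> B" "b \<noteq> c"
  shows "card (b \<inter> c) \<le> 1"
proof (cases "finite (b \<inter> c)")
  case True
  then show ?thesis
    using steiner_system_blocks_meet_once[OF assms] by (simp add: card_le_Suc0_iff_eq)
qed simp

lemma steiner_system_replication:
  assumes S: "steiner_system 2 k N B" and "finite N" "p \<in> N"
  shows "card {b\<in>B. p \<in> b} * (k - 1) = card N - 1"
proof -
  let ?Bp = "{b\<in>B. p \<in> b}"
  have fin_blocks: "finite b" if "b \<in> B" for b
    using steiner_systemD(1)[OF S that] \<open>finite N\<close> by (rule finite_subset)
  have partition: "N - {p} = (\<Union>b\<in>?Bp. b - {p})"
  proof
    show "N - {p} \<subseteq> (\<Union>b\<in>?Bp. b - {p})"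
      using steiner_system_ex1_block[OF S \<open>p \<in> N\<close>] by fastforce
    show "(\<Union>b\<in>?Bp. b - {p}) \<subseteq> N - {p}"
      using steiner_systemD(1)[OF S] by fastforce
  qed
  have disjoint: "\<forall>b\<in>?Bp. \<forall>c\<in>?Bp. b \<noteq> c \<longrightarrow> (b - {p}) \<inter> (c - {p}) = {}"
    using steiner_system_blocks_meet_once[OF S] by blast
  have "card (N - {p}) = (\<Sum>b\<in>?Bp. card (b - {p}))"
    unfolding partition
    by (rule card_UN_disjoint)
      (use steiner_system_finite_blocks[OF S \<open>finite N\<close>] fin_blocks disjoint in auto)
  also have "\<dots> = card ?Bp * (k - 1)"
    using fin_blocks steiner_systemD(2)[OF S] by simp
  finally show ?thesis using \<open>p \<in> N\<close> \<open>finite N\<close> by simp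
qed

lemma steiner_system_card_blocks:
  assumes S: "steiner_system 2 k N B" and "finite N"
  shows "card B * k * (k - 1) = card N * (card N - 1)"
proof -
  have "{p\<in>N. p \<in> b} = b" if "b \<in> B" for b
    using steiner_systemD(1)[OF S that] by blast
  then have "card B * k = (\<Sum>b\<in>B. card {p\<in>N. p \<in> b})"
    using steiner_systemD(2)[OF S] by simp
  also have "\<dots> = (\<Sum>p\<in>N. card {b\<in>B. p \<in> b})"
    using steiner_system_finite_blocks[OF S \<open>finite N\<close>] \<open>finite N\<close>
    by (rule sum_card_filter_swap)
  finally have "card B * k * (k - 1) = (\<Sum>p\<in>N. card {b\<in>B. p \<in> b} * (k - 1))"
    by (simp add: sum_distrib_right)
  also have "\<dots> = card N * (card N - 1)"
    using steiner_system_replication[OF S \<open>finite N\<close>] by simp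
  finally show ?thesis .
qed

definition supp :: "nat list \<Rightarrow> nat set" where
  "supp x = {i. i < length x \<and> x ! i \<noteq> 0}"

lemma finite_supp [simp]: "finite (supp x)"
  by (simp add: supp_def)

lemma wt_eq_card_supp: "wt x = card (supp x)"
  by (simp add: wt_def supp_def)

lemma hdist_add_two_le_if_common_symbol:
  assumes "length x = length y" "i < length x" "x ! i = y ! i" "x ! i \<noteq> 0"
  shows "hdist x y + 2 \<le> wt x + wt y"
proof -
  have i: "i \<in> supp x \<inter> supp y" using assms by (simp add: supp_def)
  have "{j. j < length x \<and> x ! j \<noteq> y ! j} \<subseteq> (supp x \<union> supp y) - {i}"
    using assms by (auto simp: supp_def)
  then have "hdist x y \<le> card ((supp x \<union> supp y) - {i})"
    unfolding hdist_def by (rule card_mono[rotated]) simp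
  also have "\<dots> = card (supp x \<union> supp y) - 1"
    using i by simp
  moreover have "0 < card (supp x \<union> supp y)" "0 < card (supp x \<inter> supp y)"
    using i by (auto simp: card_gt_0_iff)
  ultimately show ?thesis
    using card_Un_Int[of "supp x" "supp y"] by (simp add: wt_eq_card_supp)
qed

lemma hdist_add_card_supp_Int:
  assumes "length x = length y" "\<forall>i \<in> supp x \<inter> supp y. x ! i \<noteq> y ! i"
  shows "hdist x y + card (supp x \<inter> supp y) = wt x + wt y"
proof -
  have "{i. i < length x \<and> x ! i \<noteq> y ! i} = supp x \<union> supp y"
    using assms by (auto simp: supp_def)
  then show ?thesis
    using card_Un_Int[of "supp x" "supp y"] by (simp add: hdist_def wt_eq_card_supp)
qed

lemma code_column_card_le:
  assumes C: "is_code q n w d C" and d: "2 * w - 1 \<le> d" and "i < n"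
  shows "card {x\<in>C. x ! i \<noteq> 0} \<le> q - 1"
proof -
  have word: "length x = n" "\<forall>j<n. x ! j < q" "wt x = w" if "x \<in> C" for x
    using C that unfolding is_code_def J_def words_def by auto
  have "inj_on (\<lambda>x. x ! i) {x\<in>C. x ! i \<noteq> 0}"
  proof (rule inj_onI, rule ccontr)
    fix x y
    assume x: "x \<in> {x\<in>C. x ! i \<noteq> 0}" and y: "y \<in> {x\<in>C. x ! i \<noteq> 0}"
      and "x ! i = y ! i" "x \<noteq> y"
    have "hdist x y + 2 \<le> wt x + wt y"
    proof (rule hdist_add_two_le_if_common_symbol)
      show "length x = length y" "i < length x"
        using word(1) x y \<open>i < n\<close> by auto
    qed (use x \<open>x ! i = y ! i\<close> in auto)
    moreover have "d \<le> hdist x y"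
      using C x y \<open>x \<noteq> y\<close> unfolding is_code_def by auto
    moreover have "wt x = w" "wt y = w"
      using word(3) x y by auto
    ultimately show False
      using d by linarith
  qed
  moreover have "(\<lambda>x. x ! i) ` {x\<in>C. x ! i \<noteq> 0} \<subseteq> {1..<q}"
    using word(2) \<open>i < n\<close> by auto
  ultimately have "card {x\<in>C. x ! i \<noteq> 0} \<le> card {1..<q}"
    by (rule card_inj_on_le) simp
  then show ?thesis by simp
qed

lemma code_card_mult_le:
  assumes C: "is_code q n w d C" and d: "2 * w - 1 \<le> d" and "finite C"
  shows "card C * w \<le> n * (q - 1)"
proof -
  have "supp x = {i\<in>{..<n}. x ! i \<noteq> 0}" "card (supp x) = w" if "x \<in> C" for x
    using C that unfolding is_code_def J_def words_def supp_def wt_def by auto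
  then have "card C * w = (\<Sum>x\<in>C. card {i\<in>{..<n}. x ! i \<noteq> 0})"
    by simp
  also have "\<dots> = (\<Sum>i<n. card {x\<in>C. x ! i \<noteq> 0})"
    using \<open>finite C\<close> by (simp add: sum_card_filter_swap)
  also have "\<dots> \<le> (\<Sum>i<n. q - 1)"
    using code_column_card_le[OF C d] by (intro sum_mono) simp
  finally show ?thesis by simp
qed

lemma code_alphabet_lower_bound:
  assumes C: "is_code q n w d C" and d: "2 * w - 1 \<le> d" and "finite C"
    and size: "card C * (w choose 2) = n choose 2" and "0 < n"
  shows "n - 1 \<le> (q - 1) * (w - 1)"
proof -
  have "n * (n - 1) = card C * (2 * (w choose 2))"
    using size two_mult_choose_two[of n] by simp
  also have "\<dots> = card C * w * (w - 1)"
    by (simp add: two_mult_choose_two)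
  also have "\<dots> \<le> n * (q - 1) * (w - 1)"
    using code_card_mult_le[OF C d \<open>finite C\<close>] by simp
  finally show ?thesis
    using \<open>0 < n\<close> by (simp add: mult.assoc)
qed

text \<open>Coordinate \<open>i\<close> stands for the point \<open>f i\<close>, and \<open>H p b\<close> is the label of the block \<open>b\<close>
  among the blocks through \<open>p\<close>.\<close>

definition block_word :: "nat \<Rightarrow> (nat \<Rightarrow> 'a) \<Rightarrow> ('a \<Rightarrow> 'a set \<Rightarrow> nat) \<Rightarrow> 'a set \<Rightarrow> nat list" where
  "block_word n f H b = map (\<lambda>i. if f i \<in> b then H (f i) b else 0) [0..<n]"

lemma length_block_word [simp]: "length (block_word n f H b) = n"
  by (simp add: block_word_def)

lemma nth_block_word [simp]:
  "i < n \<Longrightarrow> block_word n f H b ! i = (if f i \<in> b then H (f i) b else 0)"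
  by (simp add: block_word_def)

lemma supp_block_word:
  assumes "\<forall>i<n. f i \<in> b \<longrightarrow> H (f i) b \<noteq> 0"
  shows "supp (block_word n f H b) = {i\<in>{..<n}. f i \<in> b}"
  using assms by (auto simp: supp_def split: if_splits)

lemma wt_block_word:
  assumes "bij_betw f {..<n} N" "b \<subseteq> N" "\<forall>i<n. f i \<in> b \<longrightarrow> H (f i) b \<noteq> 0"
  shows "wt (block_word n f H b) = card b"
  unfolding wt_eq_card_supp supp_block_word[where H = H, OF assms(3)]
  using assms(1,2) by (rule bij_betw_card_filter)

lemma hdist_block_word:
  assumes f: "bij_betw f {..<n} N" and "b \<subseteq> N" "c \<subseteq> N"
    and pos: "\<forall>i<n. f i \<in> b \<longrightarrow> H (f i) b \<noteq> 0" "\<forall>i<n. f i \<in> c \<longrightarrow> H (f i) c \<noteq> 0"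
    and labels_differ: "\<forall>p \<in> b \<inter> c. H p b \<noteq> H p c"
  shows "hdist (block_word n f H b) (block_word n f H c) + card (b \<inter> c) = card b + card c"
proof -
  have "supp (block_word n f H b) \<inter> supp (block_word n f H c) = {i\<in>{..<n}. f i \<in> b \<inter> c}"
    using pos by (auto simp: supp_block_word)
  moreover have "card {i\<in>{..<n}. f i \<in> b \<inter> c} = card (b \<inter> c)"
    using f \<open>b \<subseteq> N\<close> by (intro bij_betw_card_filter) auto
  moreover have "wt (block_word n f H b) = card b" "wt (block_word n f H c) = card c"
    by (rule wt_block_word[where H = H, OF f \<open>b \<subseteq> N\<close> pos(1)],
        rule wt_block_word[where H = H, OF f \<open>c \<subseteq> N\<close> pos(2)])
  ultimately show ?thesis
    using hdist_add_card_supp_Int[of "block_word n f H b" "block_word n f H c"] labels_differ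
    by auto
qed

lemma steiner_system_code:
  assumes S: "steiner_system 2 w N B" and "finite N" "card N = n"
    and r: "r * (w - 1) = n - 1" and "2 \<le> w"
  shows "\<exists>C. is_code (r + 1) n w (2 * w - 1) C \<and> finite C \<and> card C * (w choose 2) = n choose 2"
proof -
  have block: "b \<subseteq> N" "card b = w" if "b \<in> B" for b
    using steiner_systemD[OF S that] by auto
  have "card {b\<in>B. p \<in> b} = r" if "p \<in> N" for p
  proof -
    have "card {b\<in>B. p \<in> b} * (w - 1) = r * (w - 1)"
      using steiner_system_replication[OF S \<open>finite N\<close> that] r \<open>card N = n\<close> by simp
    then show ?thesis using \<open>2 \<le> w\<close> by simp
  qed
  then have "\<forall>p\<in>N. \<exists>h. bij_betw h {b\<in>B. p \<in> b} {1..r}"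
    using steiner_system_finite_blocks[OF S \<open>finite N\<close>] by (auto intro: finite_same_card_bij)
  then obtain H where H: "\<And>p. p \<in> N \<Longrightarrow> bij_betw (H p) {b\<in>B. p \<in> b} {1..r}"
    by metis
  obtain f where f: "bij_betw f {..<n} N"
    using finite_same_card_bij[of "{..<n}" N] \<open>finite N\<close> \<open>card N = n\<close> by auto
  have label: "H (f i) b \<in> {1..r}" if "i < n" "b \<in> B" "f i \<in> b" for i b
  proof -
    have "f i \<in> N" using f \<open>i < n\<close> by (simp add: bij_betwE)
    then have "bij_betw (H (f i)) {b\<in>B. f i \<in> b} {1..r}" by (rule H)
    then show ?thesis using that by (auto dest: bij_betwE)
  qed
  have pos: "\<forall>i<n. f i \<in> b \<longrightarrow> H (f i) b \<noteq> 0" if "b \<in> B" for b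
    using label[OF _ that] by (simp add: Suc_le_eq)
  have in_J: "block_word n f H b \<in> J (r + 1) n w" if "b \<in> B" for b
  proof -
    have "\<forall>i<n. block_word n f H b ! i < r + 1"
      using label[OF _ that] by (simp add: less_Suc_eq_le)
    moreover have "wt (block_word n f H b) = w"
      using wt_block_word[where H = H, OF f block(1) pos] block(2) that by simp
    ultimately show ?thesis unfolding J_def words_def by simp
  qed
  have dist: "2 * w - 1 \<le> hdist (block_word n f H b) (block_word n f H c)"
    if "b \<in> B" "c \<in> B" "b \<noteq> c" for b c
  proof -
    have "H p b \<noteq> H p c" if "p \<in> b \<inter> c" for p
    proof -
      have "p \<in> N" using block(1) \<open>b \<in> B\<close> that by blast
      then have "inj_on (H p) {b\<in>B. p \<in> b}" by (rule bij_betw_imp_inj_on[OF H])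
      then show ?thesis
        using inj_onD[of "H p" _ b c] \<open>b \<in> B\<close> \<open>c \<in> B\<close> \<open>b \<noteq> c\<close> that by blast
    qed
    then have "hdist (block_word n f H b) (block_word n f H c) + card (b \<inter> c) = w + w"
      using hdist_block_word[where H = H, OF f block(1) block(1) pos pos] block(2) that by simp
    then show ?thesis
      using steiner_system_card_Int_le_1[OF S that] by linarith
  qed
  have "inj_on (block_word n f H) B"
  proof (rule inj_onI, rule ccontr)
    fix b c assume "b \<in> B" "c \<in> B" "block_word n f H b = block_word n f H c" "b \<noteq> c"
    then show False using dist[of b c] \<open>2 \<le> w\<close> by (simp add: hdist_def)
  qed
  then have "card (block_word n f H ` B) = card B"
    by (simp add: card_image)
  moreover have "card B * (w choose 2) = n choose 2"
  proof -
    have "2 * (card B * (w choose 2)) = card B * (2 * (w choose 2))"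
      by simp
    also have "\<dots> = n * (n - 1)"
      using steiner_system_card_blocks[OF S \<open>finite N\<close>] \<open>card N = n\<close>
      by (simp add: two_mult_choose_two mult.assoc)
    also have "\<dots> = 2 * (n choose 2)"
      by (simp add: two_mult_choose_two)
    finally show ?thesis by simp
  qed
  moreover have "is_code (r + 1) n w (2 * w - 1) (block_word n f H ` B)"
    unfolding is_code_def
  proof (intro conjI ballI impI)
    show "block_word n f H ` B \<subseteq> J (r + 1) n w"
      using in_J by (rule image_subsetI)
  next
    fix x y assume "x \<in> block_word n f H ` B" "y \<in> block_word n f H ` B" "x \<noteq> y"
    then obtain b c where "b \<in> B" "c \<in> B" "x = block_word n f H b" "y = block_word n f H c"
      by blast
    with \<open>x \<noteq> y\<close> show "2 * w - 1 \<le> hdist x y"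
      using dist by blast
  qed
  moreover have "finite (block_word n f H ` B)"
    using steiner_system_finite_blocks[OF S \<open>finite N\<close>] by simp
  ultimately show ?thesis by auto
qed

theorem mainTheorem8:
  fixes w n :: nat
  assumes "2 \<le> w" and "w < n" and "steiner_exists 2 w n"
  shows "real (q0' 2 w n) = (real n - 1) / (real w - 1) + 1"
proof -
  obtain N :: "nat set" and B where S: "steiner_system 2 w N B" and "finite N" "card N = n"
    using assms(3) unfolding steiner_exists_def by auto
  then obtain p where "p \<in> N" using \<open>w < n\<close> by fastforce
  define r where "r = card {b\<in>B. p \<in> b}"
  have r: "r * (w - 1) = n - 1"
    using steiner_system_replication[OF S \<open>finite N\<close> \<open>p \<in> N\<close>] \<open>card N = n\<close> by (simp add: r_def)
  have d: "2 * w - 2 + 1 = 2 * w - 1" using \<open>2 \<le> w\<close> by simp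
  have "q0' 2 w n = r + 1"
    unfolding q0'_def d real_eq_divide_iff_mult_eq[OF zero_less_binomial[OF \<open>2 \<le> w\<close>]]
  proof (rule Least_equality)
    show "\<exists>C. is_code (r + 1) n w (2 * w - 1) C \<and> finite C \<and> card C * (w choose 2) = n choose 2"
      using steiner_system_code[OF S \<open>finite N\<close> \<open>card N = n\<close> r \<open>2 \<le> w\<close>] .
  next
    fix q assume "\<exists>C. is_code q n w (2 * w - 1) C \<and> finite C \<and> card C * (w choose 2) = n choose 2"
    then have "r * (w - 1) \<le> (q - 1) * (w - 1)"
      using code_alphabet_lower_bound[of q n w "2 * w - 1"] r \<open>w < n\<close> by auto
    moreover have "0 < r" using r assms(1,2) by (cases r) auto
    ultimately show "r + 1 \<le> q" using \<open>2 \<le> w\<close> by simp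
  qed
  moreover have "real n - 1 = real r * (real w - 1)"
    using arg_cong[OF r, of real] assms(1,2) by (simp add: of_nat_diff)
  ultimately show ?thesis using assms(1) by simp
qed

end
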